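(* Let $\psi\in\Psi$ satisfy $\limsup_{t\to\infty}\frac{\psi(2t)}{\psi(t)}<2$ and let $\tau_\omega$ be a Dixmier trace on $m_\psi$. Then for every positive $x=\{x_k\}\in m_\psi$, $$\tau_\omega(x)=\omega\Big(\Big\{\frac1{\psi(n)}\sum_{k:\ x_k\ge\psi(n)/n}x_k\Big\}_n\Big).$$
   Context: $\Psi$ is the class of concave increasing functions $\psi$ on $[0,\infty)$ with $\psi(\infty)=\infty$, $\psi(t)=O(t)$ as $t\to0$, $\psi(t)=o(t)$ as $t\to\infty$. $m_\psi$ is the space of sequences $x$ with $\sup_n\frac1{\psi(n)}\sum_{k=1}^nx_k^*<\infty$, where $\{x_k^*\}$ is $\{|x_k|\}$ rearranged nonincreasingly. For $n\ge1$, $\sigma_n(x_1,x_2,\dots)=(x_1,\dots,x_1,x_2,\dots,x_2,\dots)$ (each entry $n$ times). A dilation invariant generalised limit on $l_\infty$ is a positive linear $\omega$ with $\omega(1)=1$, $\omega|_{c_0}=0$, $\omega\circ\sigma_n=\omega$ for all $n$. For such $\omega$ put $\tau_\omega(x)=\omega(\{\frac1{\psi(N)}\sum_{k=1}^Nx_k^*\}_N)$ for $0\le x\in m_\psi$; if this is additive on the positive cone, $\tau_\omega$ is called a Dixmier trace on $m_\psi$. *)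

theory Defs
  imports "HOL-Analysis.Analysis" "HOL-Library.Landau_Symbols"
begin

(* Sequences are 0-based: x k stands for the paper's x_{k+1}. *)

definition Psi_class :: "(real \<Rightarrow> real) \<Rightarrow> bool" where
  "Psi_class \<psi> \<longleftrightarrow>
     concave_on {0..} \<psi> \<and> mono_on {0..} \<psi> \<and>
     filterlim \<psi> at_top at_top \<and>
     \<psi> \<in> O[at_right 0](\<lambda>t. t) \<and>
     \<psi> \<in> o[at_top](\<lambda>t. t)"

(* nonincreasing rearrangement of |x|: decr x k = x^*_{k+1} *)
definition decr :: "(nat \<Rightarrow> real) \<Rightarrow> nat \<Rightarrow> real" where
  "decr x k = Inf {s. 0 \<le> s \<and> finite {j. s < \<bar>x j\<bar>} \<and> card {j. s < \<bar>x j\<bar>} \<le> k}"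

(* (1/psi(N)) * sum_{k=1}^N x^*_k, as a 0-based sequence in N-1 *)
definition avg_seq :: "(real \<Rightarrow> real) \<Rightarrow> (nat \<Rightarrow> real) \<Rightarrow> nat \<Rightarrow> real" where
  "avg_seq \<psi> x k = (1 / \<psi> (real (Suc k))) * (\<Sum>i\<le>k. decr x i)"

definition m_psi :: "(real \<Rightarrow> real) \<Rightarrow> (nat \<Rightarrow> real) set" where
  "m_psi \<psi> = {x. Bseq x \<and> bdd_above (range (avg_seq \<psi> x))}"

(* dilation: (sigma_n x)_j = x_{ceil(j/n)} in 1-based indexing *)
definition sigma :: "nat \<Rightarrow> (nat \<Rightarrow> real) \<Rightarrow> nat \<Rightarrow> real" where
  "sigma n x k = x (k div n)"

definition dil_inv_gen_limit :: "((nat \<Rightarrow> real) \<Rightarrow> real) \<Rightarrow> bool" where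
  "dil_inv_gen_limit \<omega> \<longleftrightarrow>
     (\<forall>x y a b. Bseq x \<longrightarrow> Bseq y \<longrightarrow> \<omega> (\<lambda>k. a * x k + b * y k) = a * \<omega> x + b * \<omega> y) \<and>
     (\<forall>x. Bseq x \<longrightarrow> (\<forall>k. 0 \<le> x k) \<longrightarrow> 0 \<le> \<omega> x) \<and>
     \<omega> (\<lambda>_. 1) = 1 \<and>
     (\<forall>x. x \<longlonglongrightarrow> 0 \<longrightarrow> \<omega> x = 0) \<and>
     (\<forall>n x. 1 \<le> n \<longrightarrow> Bseq x \<longrightarrow> \<omega> (sigma n x) = \<omega> x)"

definition tau :: "(real \<Rightarrow> real) \<Rightarrow> ((nat \<Rightarrow> real) \<Rightarrow> real) \<Rightarrow> (nat \<Rightarrow> real) \<Rightarrow> real" where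
  "tau \<psi> \<omega> x = \<omega> (avg_seq \<psi> x)"

definition is_dixmier_trace :: "(real \<Rightarrow> real) \<Rightarrow> ((nat \<Rightarrow> real) \<Rightarrow> real) \<Rightarrow> bool" where
  "is_dixmier_trace \<psi> \<omega> \<longleftrightarrow>
     (\<forall>x y. x \<in> m_psi \<psi> \<longrightarrow> y \<in> m_psi \<psi> \<longrightarrow> (\<forall>k. 0 \<le> x k) \<longrightarrow> (\<forall>k. 0 \<le> y k) \<longrightarrow>
        tau \<psi> \<omega> (\<lambda>k. x k + y k) = tau \<psi> \<omega> x + tau \<psi> \<omega> y)"

end

theory Submission
  imports Defs
begin

text \<open>
  Let \<open>S(m)\<close> be the sum of the \<open>m\<close> largest terms of \<open>x\<close> (\<open>top_sum m\<close>), \<open>N = n + 1\<close>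
  and \<open>s = card {k. \<psi>(N)/N \<le> x k}\<close>. The terms of \<open>x\<close> above \<open>\<psi>(N)/N\<close> are exactly its
  \<open>s\<close> largest ones, so \<open>\<tau>(x)\<close> and the right-hand side are \<open>\<omega>\<close> applied to \<open>S(N)/\<psi>(N)\<close>
  and to \<open>S(s)/\<psi>(N)\<close>. The doubling condition on \<open>\<psi>\<close> gives \<open>s \<le> K N\<close> with \<open>K = 2^p\<close>,
  and the terms of rank \<open>\<ge> s\<close> are \<open>\<le> \<psi>(N)/N\<close>; hence the two sequences differ by at most
  \<open>1/L + G\<^sub>L(N) + K G\<^sub>K(K N)\<close> for every \<open>L \<ge> 1\<close>, where
  \<open>G\<^sub>K(m) = (S(m) - S(m div K))/\<psi>(m)\<close> (\<open>upper_avg K m\<close>).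
  Additivity of the trace on \<open>\<sigma>\<^sub>2 x\<close>, the sum of two copies of \<open>x\<close>, gives
  \<open>\<omega>(G\<^sub>2) = 0\<close>; since \<open>G\<^sub>K\<close> varies slowly, dilation invariance propagates this to
  \<open>\<omega>(G\<^bsub>2^q\<^esub>) = 0\<close> and to \<open>\<omega>(G\<^sub>K(K \<cdot>)) = 0\<close>. Hence the two limits differ
  by at most \<open>1/L\<close> for every power of two \<open>L\<close>.
\<close>

section \<open>Functions of class \<open>\<Psi>\<close>\<close>

locale Psi_function =
  fixes \<psi> :: "real \<Rightarrow> real"
  assumes Psi_class: "Psi_class \<psi>"
begin

lemma psi_concave: "concave_on {0..} \<psi>"
  and psi_mono_on: "mono_on {0..} \<psi>"
  and psi_at_top: "filterlim \<psi> at_top at_top"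
  and psi_bigo_at_0: "\<psi> \<in> O[at_right 0](\<lambda>t. t)"
  and psi_smallo_at_top: "\<psi> \<in> o[at_top](\<lambda>t. t)"
  using Psi_class unfolding Psi_class_def by auto

lemma psi_mono: "0 \<le> a \<Longrightarrow> a \<le> b \<Longrightarrow> \<psi> a \<le> \<psi> b"
  using psi_mono_on by (auto intro: mono_onD)

text \<open>Since \<open>\<psi>(e) \<ge> -c e\<close> near 0, comparing \<open>\<psi>\<close> with its chord over \<open>[e, t]\<close> and letting
  \<open>e \<rightarrow> 0\<close> shows that \<open>\<psi>(t)/t\<close> is nonincreasing.\<close>
lemma scaled_psi_le:
  assumes "0 < a" "a \<le> t"
  shows "a * \<psi> t \<le> t * \<psi> a"
proof (cases "a = t")
  case False
  hence at: "a < t" using assms by simp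
  from psi_bigo_at_0 obtain c where c: "c > 0" "eventually (\<lambda>e. norm (\<psi> e) \<le> c * norm e) (at_right 0)"
    by (elim landau_o.bigE)
  have small: "eventually (\<lambda>e. 0 < e \<and> e < a) (at_right (0::real))"
    using eventually_at_right_real[OF assms(1)] by (rule eventually_mono) auto
  have "eventually (\<lambda>e. (a - e) / (t - e) * \<psi> t \<le> \<psi> a + c * e) (at_right 0)"
    using small c(2)
  proof eventually_elim
    case (elim e)
    define l where "l = (a - e) / (t - e)"
    have l: "0 \<le> l" "l \<le> 1" using elim at unfolding l_def by (auto simp: field_simps)
    have "l * (t - e) = a - e" using elim at unfolding l_def by simp
    hence l_comb: "a = (1 - l) * e + l * t" by (simp add: algebra_simps)
    have "(1 - l) * \<psi> e + l * \<psi> t \<le> \<psi> a"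
      using concave_onD[OF psi_concave l(1,2), of e t] elim at l_comb by auto
    moreover have "- (c * e) \<le> (1 - l) * \<psi> e"
    proof -
      have "- (c * e) \<le> \<psi> e" using elim by auto
      hence "(1 - l) * - (c * e) \<le> (1 - l) * \<psi> e" using l by (intro mult_left_mono) auto
      moreover have "(1 - l) * (c * e) \<le> c * e" using l c(1) elim by (simp add: mult_left_le_one_le)
      ultimately show ?thesis by linarith
    qed
    ultimately show ?case unfolding l_def by linarith
  qed
  moreover have "((\<lambda>e. (a - e) / (t - e) * \<psi> t) \<longlongrightarrow> a / t * \<psi> t) (at_right 0)"
    using at assms by (auto intro!: tendsto_eq_intros)
  moreover have "((\<lambda>e. \<psi> a + c * e) \<longlongrightarrow> \<psi> a) (at_right 0)"
    by (auto intro!: tendsto_eq_intros)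
  ultimately have "a / t * \<psi> t \<le> \<psi> a"
    by (intro tendsto_le[of "at_right 0"]) auto
  then show ?thesis using assms at by (simp add: field_simps)
qed simp

lemma psi_pos: "0 < t \<Longrightarrow> 0 < \<psi> t"
proof (rule ccontr)
  assume t: "0 < t" and "\<not> 0 < \<psi> t"
  obtain N where N: "\<And>s. N \<le> s \<Longrightarrow> 1 \<le> \<psi> s"
    using psi_at_top by (auto simp: filterlim_at_top eventually_at_top_linorder)
  define s where "s = max N t"
  have "t * \<psi> s \<le> s * \<psi> t" using scaled_psi_le[of t s] t unfolding s_def by auto
  also have "\<dots> \<le> 0" using \<open>\<not> 0 < \<psi> t\<close> t unfolding s_def by (simp add: mult_nonneg_nonpos)
  finally have "\<psi> s \<le> 0" using t by (simp add: mult_le_0_iff)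
  with N[of s] show False unfolding s_def by simp
qed

lemma psi_mult_le: "0 < t \<Longrightarrow> 1 \<le> K \<Longrightarrow> \<psi> (K * t) \<le> K * \<psi> t"
  using scaled_psi_le[of t "K * t"] by (simp add: mult.assoc mult.left_commute[of t])

lemma psi_over_n_tendsto_0: "(\<lambda>n. \<psi> (real n) / real n) \<longlonglongrightarrow> 0"
  using filterlim_compose[OF smalloD_tendsto[OF psi_smallo_at_top] filterlim_real_sequentially]
  by (simp add: o_def)

lemma psi_doubling_bound:
  assumes "Limsup at_top (\<lambda>t. ereal (\<psi> (2 * t) / \<psi> t)) < 2"
  obtains \<theta> T where "1 \<le> \<theta>" "\<theta> < 2" "0 < T" "\<And>t q. T \<le> t \<Longrightarrow> \<psi> (2 ^ q * t) \<le> \<theta> ^ q * \<psi> t"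
proof -
  obtain \<theta> where \<theta>: "Limsup at_top (\<lambda>t. ereal (\<psi> (2 * t) / \<psi> t)) < ereal \<theta>" "\<theta> < 2"
    using ereal_dense2[OF assms] by auto
  obtain T where T: "\<And>t. T \<le> t \<Longrightarrow> \<psi> (2 * t) / \<psi> t < \<theta>"
    using Limsup_lessD[OF \<theta>(1)] by (auto simp: eventually_at_top_linorder)
  define \<theta>' where "\<theta>' = max \<theta> 1"
  define T' where "T' = max T 1"
  have double: "\<psi> (2 * t) \<le> \<theta>' * \<psi> t" if "T' \<le> t" for t
  proof -
    have "0 < \<psi> t" using psi_pos that unfolding T'_def by simp
    with T[of t] that have "\<psi> (2 * t) \<le> \<theta> * \<psi> t" unfolding T'_def by (simp add: divide_less_eq)
    also have "\<dots> \<le> \<theta>' * \<psi> t" using \<open>0 < \<psi> t\<close> unfolding \<theta>'_def by (intro mult_right_mono) auto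
    finally show ?thesis .
  qed
  have "\<psi> (2 ^ q * t) \<le> \<theta>' ^ q * \<psi> t" if "T' \<le> t" for t q
  proof (induction q)
    case (Suc q)
    have "t \<le> 2 ^ q * t" using that mult_right_mono[of 1 "2 ^ q" t] unfolding T'_def by simp
    hence "T' \<le> 2 ^ q * t" using that by simp
    hence "\<psi> (2 * (2 ^ q * t)) \<le> \<theta>' * \<psi> (2 ^ q * t)" by (rule double)
    also have "\<dots> \<le> \<theta>' * (\<theta>' ^ q * \<psi> t)" using Suc unfolding \<theta>'_def by (intro mult_left_mono) auto
    finally show ?case by (simp add: mult.assoc)
  qed simp
  moreover have "1 \<le> \<theta>'" "\<theta>' < 2" "0 < T'" using \<theta>(2) unfolding \<theta>'_def T'_def by auto
  ultimately show ?thesis using that by blast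
qed

end

section \<open>The nonincreasing rearrangement\<close>

lemma decr_cong:
  assumes "\<And>s. 0 \<le> s \<Longrightarrow> (finite {j. s < \<bar>y j\<bar>} \<and> card {j. s < \<bar>y j\<bar>} \<le> k) \<longleftrightarrow>
                          (finite {j. s < \<bar>z j\<bar>} \<and> card {j. s < \<bar>z j\<bar>} \<le> k')"
  shows "decr y k = decr z k'"
  unfolding decr_def by (rule arg_cong[where f=Inf]) (use assms in blast)

lemma decr_le:
  assumes "0 \<le> u" "finite {j. u < \<bar>x j\<bar>}" "card {j. u < \<bar>x j\<bar>} \<le> k"
  shows "decr x k \<le> u"
  unfolding decr_def by (rule cInf_lower) (use assms in \<open>auto simp: bdd_below_def\<close>)

lemma decr_ge:
  assumes "Bseq x" "\<And>s. 0 \<le> s \<Longrightarrow> finite {j. s < \<bar>x j\<bar>} \<Longrightarrow> card {j. s < \<bar>x j\<bar>} \<le> k \<Longrightarrow> v \<le> s"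
  shows "v \<le> decr x k"
proof -
  obtain B where "\<And>j. \<bar>x j\<bar> \<le> B" "0 < B" using assms(1) by (auto simp: Bseq_def)
  hence "{j. B < \<bar>x j\<bar>} = {}" by (auto simp: not_less)
  hence "B \<in> {s. 0 \<le> s \<and> finite {j. s < \<bar>x j\<bar>} \<and> card {j. s < \<bar>x j\<bar>} \<le> k}"
    using \<open>0 < B\<close> by simp
  then show ?thesis unfolding decr_def using assms(2) by (intro cInf_greatest) auto
qed

lemma decr_nonneg: "Bseq x \<Longrightarrow> 0 \<le> decr x k"
  by (rule decr_ge) auto

lemma decr_ge_if_infinite:
  assumes "Bseq x" "infinite {j. r \<le> \<bar>x j\<bar>}"
  shows "r \<le> decr x k"
proof (rule decr_ge[OF assms(1)])
  fix s assume "finite {j. s < \<bar>x j\<bar>}"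
  moreover have "{j. r \<le> \<bar>x j\<bar>} \<subseteq> {j. s < \<bar>x j\<bar>}" if "s < r" using that by auto
  ultimately show "r \<le> s" using assms(2) finite_subset by (meson not_le)
qed

lemma decr_eq_level:
  assumes "0 \<le> v" "card {j. v < \<bar>x j\<bar>} \<le> i" "i < card {j. v \<le> \<bar>x j\<bar>}"
  shows "decr x i = v"
proof -
  have fin: "finite {j. v \<le> \<bar>x j\<bar>}" using assms(3) card.infinite by fastforce
  hence fin': "finite {j. v < \<bar>x j\<bar>}" by (rule finite_subset[rotated]) auto
  have "v \<le> s" if "finite {j. s < \<bar>x j\<bar>}" "card {j. s < \<bar>x j\<bar>} \<le> i" for s
  proof (rule ccontr)
    assume "\<not> v \<le> s"
    hence "card {j. v \<le> \<bar>x j\<bar>} \<le> card {j. s < \<bar>x j\<bar>}"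
      using that(1) by (intro card_mono) auto
    with that(2) assms(3) show False by simp
  qed
  hence "v \<le> decr x i"
    unfolding decr_def using assms(1,2) fin' by (intro cInf_greatest) auto
  moreover have "decr x i \<le> v" using assms fin' by (intro decr_le)
  ultimately show ?thesis by simp
qed

lemma finite_superlevel_if_tendsto_0:
  fixes x :: "nat \<Rightarrow> real"
  assumes "x \<longlonglongrightarrow> 0" "0 < u"
  shows "finite {j. u \<le> \<bar>x j\<bar>}"
proof -
  obtain N where "\<And>n. N \<le> n \<Longrightarrow> \<bar>x n\<bar> < u"
    using assms unfolding LIMSEQ_iff by fastforce
  hence "{j. u \<le> \<bar>x j\<bar>} \<subseteq> {..<N}" by (force simp: not_le[symmetric])
  then show ?thesis using finite_subset by blast
qed

lemma strict_superlevel_eq: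
  fixes f :: "nat \<Rightarrow> real"
  assumes "finite {j. u < f j}"
  obtains u' where "u < u'" "{j. u' \<le> f j} = {j. u < f j}"
proof (cases "{j. u < f j} = {}")
  case True
  have "{j. u + 1 \<le> f j} = {}" using True by (auto simp: not_less) (meson less_add_one not_less order_trans)
  with True show ?thesis using that[of "u + 1"] by simp
next
  case False
  define u' where "u' = Min (f ` {j. u < f j})"
  have "u' \<in> f ` {j. u < f j}" unfolding u'_def using assms False by (intro Min_in) auto
  hence "u < u'" by auto
  moreover have "{j. u' \<le> f j} = {j. u < f j}"
    using assms \<open>u < u'\<close> unfolding u'_def by (auto intro: Min_le)
  ultimately show ?thesis by (rule that)
qed

lemma sum_superlevel_eq_sum_decr:
  fixes x :: "nat \<Rightarrow> real"
  assumes lim: "x \<longlonglongrightarrow> 0" and "0 < u"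
  shows "(\<Sum>j | u \<le> \<bar>x j\<bar>. \<bar>x j\<bar>) = (\<Sum>i<card {j. u \<le> \<bar>x j\<bar>}. decr x i)"
  using \<open>0 < u\<close>
proof (induction "card {j. u \<le> \<bar>x j\<bar>}" arbitrary: u rule: less_induct)
  case less
  define E where "E = {j. u \<le> \<bar>x j\<bar>}"
  have fin: "finite {j. v \<le> \<bar>x j\<bar>}" if "0 < v" for v
    using finite_superlevel_if_tendsto_0[OF lim that] .
  show ?case
  proof (cases "E = {}")
    case True
    then show ?thesis unfolding E_def by simp
  next
    case False
    define m where "m = Min ((\<lambda>j. \<bar>x j\<bar>) ` E)"
    have "m \<in> (\<lambda>j. \<bar>x j\<bar>) ` E" unfolding m_def using fin[OF less.prems] False E_def by (intro Min_in) auto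
    then obtain j0 where j0: "j0 \<in> E" "\<bar>x j0\<bar> = m" by auto
    have "u \<le> m" "0 < m" using j0 less.prems unfolding E_def by auto
    have E_eq: "E = {j. m \<le> \<bar>x j\<bar>}"
      using fin[OF less.prems] \<open>u \<le> m\<close> unfolding m_def E_def by (auto intro: Min_le)
    define E' where "E' = {j. m < \<bar>x j\<bar>}"
    have "E' \<subseteq> E" "finite E" unfolding E'_def E_eq using fin[OF \<open>0 < m\<close>] by auto
    obtain m' where m': "m < m'" "{j. m' \<le> \<bar>x j\<bar>} = E'"
      using strict_superlevel_eq[of m "\<lambda>j. \<bar>x j\<bar>"] \<open>E' \<subseteq> E\<close> \<open>finite E\<close> finite_subset
      unfolding E'_def by blast
    have "j0 \<notin> E'" using j0 unfolding E'_def by simp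
    hence "card E' < card E" using \<open>E' \<subseteq> E\<close> \<open>finite E\<close> j0(1) by (intro psubset_card_mono) auto
    hence IH: "(\<Sum>j\<in>E'. \<bar>x j\<bar>) = (\<Sum>i<card E'. decr x i)"
      using less.hyps[of m'] m' \<open>0 < m\<close> unfolding E_def by simp
    have le: "card E' \<le> card E" using \<open>card E' < card E\<close> by simp
    have "(\<Sum>j\<in>E. \<bar>x j\<bar>) = (\<Sum>j\<in>E'. \<bar>x j\<bar>) + (\<Sum>j\<in>E - E'. \<bar>x j\<bar>)"
      using sum.subset_diff[OF \<open>E' \<subseteq> E\<close> \<open>finite E\<close>, of "\<lambda>j. \<bar>x j\<bar>"] by simp
    also have "(\<Sum>j\<in>E - E'. \<bar>x j\<bar>) = (\<Sum>j\<in>E - E'. m)"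
      unfolding E_eq E'_def by (rule sum.cong) auto
    also have "\<dots> = (\<Sum>i\<in>{card E'..<card E}. m)"
      using card_Diff_subset[OF finite_subset[OF \<open>E' \<subseteq> E\<close> \<open>finite E\<close>] \<open>E' \<subseteq> E\<close>] by simp
    also have "\<dots> = (\<Sum>i\<in>{card E'..<card E}. decr x i)"
      by (rule sum.cong) (use \<open>0 < m\<close> in \<open>auto simp: E_eq E'_def intro!: decr_eq_level[symmetric]\<close>)
    also have "(\<Sum>j\<in>E'. \<bar>x j\<bar>) + (\<Sum>i\<in>{card E'..<card E}. decr x i) = (\<Sum>i<card E. decr x i)"
      using IH sum.atLeastLessThan_concat[OF _ le, of 0 "decr x"] by (simp add: lessThan_atLeast0)
    finally show ?thesis unfolding E_def .
  qed
qed

lemma decr_reindex: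
  assumes "inj f" "\<And>s. 0 \<le> s \<Longrightarrow> {j. s < \<bar>z j\<bar>} = f ` {j. s < \<bar>y j\<bar>}"
  shows "decr z k = decr y k"
proof (rule decr_cong)
  fix s :: real assume "0 \<le> s"
  have "inj_on f {j. s < \<bar>y j\<bar>}" using assms(1) by (rule inj_on_subset) simp
  then show "(finite {j. s < \<bar>z j\<bar>} \<and> card {j. s < \<bar>z j\<bar>} \<le> k) \<longleftrightarrow>
             (finite {j. s < \<bar>y j\<bar>} \<and> card {j. s < \<bar>y j\<bar>} \<le> k)"
    using assms(2)[OF \<open>0 \<le> s\<close>] by (simp add: finite_image_iff card_image)
qed

lemma decr_even_spread: "decr (\<lambda>j. if even j then y (j div 2) else 0) k = decr y k"
  by (rule decr_reindex[where f = "\<lambda>j. 2 * j"]) (auto simp: inj_def image_iff elim!: evenE)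

lemma decr_odd_spread: "decr (\<lambda>j. if odd j then y (j div 2) else 0) k = decr y k"
  by (rule decr_reindex[where f = "\<lambda>j. 2 * j + 1"]) (auto simp: inj_def image_iff elim!: oddE)

lemma decr_sigma_2: "decr (sigma 2 y) k = decr y (k div 2)"
proof (rule decr_cong)
  fix s :: real
  define A where "A = {j. s < \<bar>y j\<bar>}"
  have level: "{j. s < \<bar>sigma 2 y j\<bar>} = (\<lambda>j. 2 * j) ` A \<union> (\<lambda>j. 2 * j + 1) ` A"
  proof (intro set_eqI iffI)
    fix j assume "j \<in> {j. s < \<bar>sigma 2 y j\<bar>}"
    hence "j div 2 \<in> A" unfolding sigma_def A_def by simp
    moreover have "j = 2 * (j div 2) \<or> j = 2 * (j div 2) + 1" by presburger
    ultimately show "j \<in> (\<lambda>j. 2 * j) ` A \<union> (\<lambda>j. 2 * j + 1) ` A" by blast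
  qed (auto simp: sigma_def A_def)
  have inj: "inj_on (\<lambda>j::nat. 2 * j) A" "inj_on (\<lambda>j::nat. 2 * j + 1) A"
    by (auto simp: inj_on_def)
  have disj: "(\<lambda>j. 2 * j) ` A \<inter> (\<lambda>j. 2 * j + 1) ` A = {}" by auto presburger
  have "card ((\<lambda>j. 2 * j) ` A \<union> (\<lambda>j. 2 * j + 1) ` A) = 2 * card A" if "finite A"
    using card_Un_disjoint[OF _ _ disj] that card_image[OF inj(1)] card_image[OF inj(2)] by simp
  moreover have "finite ((\<lambda>j. 2 * j) ` A \<union> (\<lambda>j. 2 * j + 1) ` A) \<longleftrightarrow> finite A"
    using finite_image_iff[OF inj(1)] by auto
  ultimately show "(finite {j. s < \<bar>sigma 2 y j\<bar>} \<and> card {j. s < \<bar>sigma 2 y j\<bar>} \<le> k) \<longleftrightarrow>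
                   (finite {j. s < \<bar>y j\<bar>} \<and> card {j. s < \<bar>y j\<bar>} \<le> k div 2)"
    unfolding level A_def[symmetric] by auto
qed

lemma sum_lessThan_div_2:
  fixes f :: "nat \<Rightarrow> real"
  shows "(\<Sum>i<m. f (i div 2)) = 2 * (\<Sum>i<m div 2. f i) + (if odd m then f (m div 2) else 0)"
proof (induction m)
  case (Suc m)
  then show ?case by (cases "even m") (auto simp: lessThan_Suc elim!: oddE)
qed simp

section \<open>Dilation invariant generalised limits\<close>

lemma Bseq_lincomb:
  fixes f g :: "nat \<Rightarrow> real"
  assumes "Bseq f" "Bseq g"
  shows "Bseq (\<lambda>k. a * f k + b * g k)"
proof -
  obtain A B where A: "\<And>n. \<bar>f n\<bar> \<le> A" and B: "\<And>n. \<bar>g n\<bar> \<le> B"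
    using assms unfolding Bseq_def by auto
  have "\<bar>a * f n + b * g n\<bar> \<le> \<bar>a\<bar> * A + \<bar>b\<bar> * B" for n
    by (intro order_trans[OF abs_triangle_ineq] add_mono) (auto simp: abs_mult intro: mult_left_mono A B)
  then show ?thesis by (intro BseqI') simp
qed

lemma tendsto_shift_diff:
  fixes a :: "nat \<Rightarrow> real"
  assumes "(\<lambda>m. a (Suc m) - a m) \<longlonglongrightarrow> 0"
  shows "(\<lambda>m. a (m + j) - a m) \<longlonglongrightarrow> 0"
proof (induction j)
  case (Suc j)
  have "(\<lambda>m. a (Suc (m + j)) - a (m + j)) \<longlonglongrightarrow> 0"
    using LIMSEQ_ignore_initial_segment[OF assms, of j] by simp
  from tendsto_add[OF this Suc] show ?case by simp
qed simp

lemma tendsto_diff_slowly_varying: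
  fixes a :: "nat \<Rightarrow> real"
  assumes slow: "(\<lambda>m. a (Suc m) - a m) \<longlonglongrightarrow> 0"
    and g: "filterlim g at_top sequentially"
    and close: "\<And>n. h n \<le> g n + d" "\<And>n. g n \<le> h n + d"
  shows "(\<lambda>n. a (g n) - a (h n)) \<longlonglongrightarrow> 0"
proof -
  define \<phi> where "\<phi> m = (\<Sum>j\<le>d. \<bar>a (m + j) - a m\<bar>)" for m
  have "\<phi> \<longlonglongrightarrow> 0" unfolding \<phi>_def
    by (intro tendsto_null_sum tendsto_rabs_zero tendsto_shift_diff[OF slow])
  moreover have "filterlim (\<lambda>n. min (g n) (h n)) at_top sequentially"
    using g unfolding filterlim_at_top
  proof (intro allI)
    fix Z
    assume "\<forall>Z. eventually (\<lambda>n. Z \<le> g n) sequentially"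
    hence "eventually (\<lambda>n. Z + d \<le> g n) sequentially" by blast
    then show "eventually (\<lambda>n. Z \<le> min (g n) (h n)) sequentially"
    proof eventually_elim
      case (elim n)
      then show ?case using close(2)[of n] by simp
    qed
  qed
  ultimately have lim: "(\<lambda>n. \<phi> (min (g n) (h n))) \<longlonglongrightarrow> 0"
    by (rule filterlim_compose)
  have bound: "\<bar>a (g n) - a (h n)\<bar> \<le> \<phi> (min (g n) (h n))" for n
  proof -
    have shift: "\<bar>a (m + j) - a m\<bar> \<le> \<phi> m" if "j \<le> d" for m j
      unfolding \<phi>_def using that by (intro member_le_sum) auto
    show ?thesis
    proof (cases "h n \<le> g n")
      case True
      then show ?thesis using shift[of "g n - h n" "h n"] close(2)[of n] by (simp add: min_absorb2)
    next
      case False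
      then show ?thesis using shift[of "h n - g n" "g n"] close(1)[of n]
        by (simp add: min_absorb1 abs_minus_commute)
    qed
  qed
  show ?thesis
    by (rule Lim_null_comparison[OF _ lim]) (use bound in \<open>simp add: always_eventually\<close>)
qed

locale dilation_invariant_limit =
  fixes \<omega> :: "(nat \<Rightarrow> real) \<Rightarrow> real"
  assumes dil_inv_gen_limit: "dil_inv_gen_limit \<omega>"
begin

lemma omega_lincomb: "Bseq f \<Longrightarrow> Bseq g \<Longrightarrow> \<omega> (\<lambda>k. a * f k + b * g k) = a * \<omega> f + b * \<omega> g"
  and omega_nonneg: "Bseq f \<Longrightarrow> (\<And>k. 0 \<le> f k) \<Longrightarrow> 0 \<le> \<omega> f"
  and omega_1: "\<omega> (\<lambda>_. 1) = 1"
  and omega_null: "f \<longlonglongrightarrow> 0 \<Longrightarrow> \<omega> f = 0"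
  and omega_sigma: "1 \<le> n \<Longrightarrow> Bseq f \<Longrightarrow> \<omega> (sigma n f) = \<omega> f"
  using dil_inv_gen_limit unfolding dil_inv_gen_limit_def by blast+

lemma omega_add: "Bseq f \<Longrightarrow> Bseq g \<Longrightarrow> \<omega> (\<lambda>k. f k + g k) = \<omega> f + \<omega> g"
  using omega_lincomb[of f g 1 1] by simp

lemma omega_diff: "Bseq f \<Longrightarrow> Bseq g \<Longrightarrow> \<omega> (\<lambda>k. f k - g k) = \<omega> f - \<omega> g"
  using omega_lincomb[of f g 1 "-1"] by simp

lemma omega_const: "\<omega> (\<lambda>_. c) = c"
  using omega_lincomb[of "\<lambda>_. 1" "\<lambda>_. 1" c 0] omega_1 by simp

lemma omega_mono_eventually:
  assumes f: "Bseq f" and g: "Bseq g" and le: "eventually (\<lambda>k. f k \<le> g k) sequentially"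
  shows "\<omega> f \<le> \<omega> g"
proof -
  define h where "h k = g k - f k" for k
  have h: "Bseq h" unfolding h_def using Bseq_lincomb[OF g f, of 1 "-1"] by simp
  have pos: "Bseq (\<lambda>k. max (h k) 0)" by (rule Bseq_eventually_mono[OF always_eventually h]) (simp add: abs_ge_self)
  have neg: "Bseq (\<lambda>k. min (h k) 0)" by (rule Bseq_eventually_mono[OF always_eventually h]) (simp add: min_def)
  have "(\<lambda>k. min (h k) 0) \<longlonglongrightarrow> 0"
    by (rule tendsto_eventually) (use le in \<open>eventually_elim, auto simp: h_def\<close>)
  moreover have "(\<lambda>k. max (h k) 0 + min (h k) 0) = h" by (auto simp: fun_eq_iff)
  ultimately have "\<omega> h = \<omega> (\<lambda>k. max (h k) 0)"
    using omega_add[OF pos neg] omega_null by simp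
  also have "\<dots> \<ge> 0" by (rule omega_nonneg[OF pos]) simp
  finally show ?thesis using omega_diff[OF g f] unfolding h_def by simp
qed

lemma omega_abs_diff_le:
  assumes "Bseq f" "Bseq g" "Bseq w" "eventually (\<lambda>n. \<bar>f n - g n\<bar> \<le> w n) sequentially"
  shows "\<bar>\<omega> f - \<omega> g\<bar> \<le> \<omega> w"
proof -
  have "Bseq (\<lambda>n. f n - g n)" "Bseq (\<lambda>n. g n - f n)"
    using Bseq_lincomb[OF assms(1,2), of 1 "-1"] Bseq_lincomb[OF assms(2,1), of 1 "-1"] by simp_all
  with assms have "\<omega> (\<lambda>n. f n - g n) \<le> \<omega> w" "\<omega> (\<lambda>n. g n - f n) \<le> \<omega> w"
    by (auto intro!: omega_mono_eventually elim: eventually_mono)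
  then show ?thesis using omega_diff[OF assms(1,2)] omega_diff[OF assms(2,1)] by linarith
qed

text \<open>For slowly varying \<open>a\<close>, \<open>n \<mapsto> a((n+1) div K)\<close> and \<open>n \<mapsto> a(K (n+1))\<close> differ by
  null sequences from \<open>sigma K\<close> applied to \<open>n \<mapsto> a(n+1)\<close> and to \<open>n \<mapsto> a(K (n+1))\<close>.\<close>
lemma omega_div_eq:
  assumes a: "Bseq a" and slow: "(\<lambda>m. a (Suc m) - a m) \<longlonglongrightarrow> 0" and K: "1 \<le> K"
  shows "\<omega> (\<lambda>n. a ((n + 1) div K)) = \<omega> (\<lambda>n. a (n + 1))"
proof -
  have "\<omega> (\<lambda>n. a (n + 1)) = \<omega> (\<lambda>n. a (n div K + 1))"
    using omega_sigma[OF K Bseq_subseq[OF a]] unfolding sigma_def by simp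
  moreover have "(\<lambda>n. a (n div K + 1) - a ((n + 1) div K)) \<longlonglongrightarrow> 0"
  proof (rule tendsto_diff_slowly_varying[OF slow, where d = 1])
    show "filterlim (\<lambda>n. n div K + 1) at_top sequentially"
      using filterlim_at_top_div_const_nat[of K] K
      by (auto intro: filterlim_at_top_mono[where f = "\<lambda>n. n div K"])
    show "(n + 1) div K \<le> n div K + 1 + 1" for n
    proof -
      have "(n + 1) div K \<le> (n + K) div K" using K by (intro div_le_mono) simp
      then show ?thesis using K by simp
    qed
  qed (simp add: div_le_mono)
  ultimately show ?thesis
    using omega_null omega_diff[OF Bseq_subseq[OF a] Bseq_subseq[OF a]] by fastforce
qed

lemma omega_mult_eq:
  assumes a: "Bseq a" and slow: "(\<lambda>m. a (Suc m) - a m) \<longlonglongrightarrow> 0" and K: "1 \<le> K"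
  shows "\<omega> (\<lambda>n. a (K * (n + 1))) = \<omega> (\<lambda>n. a (n + 1))"
proof -
  have "\<omega> (\<lambda>n. a (K * (n + 1))) = \<omega> (\<lambda>n. a (K * (n div K + 1)))"
    using omega_sigma[OF K Bseq_subseq[OF a, of "\<lambda>n. K * (n + 1)"]] unfolding sigma_def by simp
  moreover have "(\<lambda>n. a (K * (n div K + 1)) - a (n + 1)) \<longlonglongrightarrow> 0"
  proof (rule tendsto_diff_slowly_varying[OF slow, where d = K])
    have "n div K \<le> K * (n div K + 1)" for n using K by (simp add: trans_le_add2)
    then show "filterlim (\<lambda>n. K * (n div K + 1)) at_top sequentially"
      using K by (intro filterlim_at_top_mono[OF filterlim_at_top_div_const_nat[of K]] always_eventually) simp_all
    show "n + 1 \<le> K * (n div K + 1) + K" "K * (n div K + 1) \<le> n + 1 + K" for n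
    proof -
      have "K * (n div K) + n mod K = n" "n mod K < K" "K * (n div K + 1) = K * (n div K) + K"
        using K by (simp_all add: distrib_left)
      then show "n + 1 \<le> K * (n div K + 1) + K" "K * (n div K + 1) \<le> n + 1 + K" by linarith+
    qed
  qed
  ultimately show ?thesis
    using omega_null omega_diff[OF Bseq_subseq[OF a] Bseq_subseq[OF a]] by fastforce
qed

end

lemma eq_if_abs_diff_le_pow_2:
  fixes a b :: real
  assumes "\<And>q. \<bar>a - b\<bar> \<le> 1 / 2 ^ q"
  shows "a = b"
proof (rule ccontr)
  assume "a \<noteq> b"
  then obtain q where "(1 / 2) ^ q < \<bar>a - b\<bar>" using real_arch_pow_inv[of "\<bar>a - b\<bar>" "1 / 2"] by auto
  with assms[of q] show False by (simp add: power_one_over)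
qed

section \<open>Positive elements of \<open>m\<^sub>\<psi>\<close>\<close>

locale m_psi_element = Psi_function +
  fixes x :: "nat \<Rightarrow> real"
  assumes x_in_m_psi: "x \<in> m_psi \<psi>" and x_nonneg: "\<And>k. 0 \<le> x k"
begin

lemma x_Bseq: "Bseq x" and avg_seq_bdd_above: "bdd_above (range (avg_seq \<psi> x))"
  using x_in_m_psi unfolding m_psi_def by auto

lemma abs_x [simp]: "\<bar>x j\<bar> = x j"
  using x_nonneg[of j] by simp

lemma decr_x_nonneg: "0 \<le> decr x k"
  using decr_nonneg[OF x_Bseq] .

definition top_sum :: "nat \<Rightarrow> real" where
  "top_sum m = (\<Sum>i<m. decr x i)"

definition m_psi_norm :: real where
  "m_psi_norm = Sup (range (avg_seq \<psi> x))"

lemma top_sum_Suc: "top_sum (Suc m) = top_sum m + decr x m"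
  unfolding top_sum_def by simp

lemma top_sum_split: "j \<le> m \<Longrightarrow> top_sum m = top_sum j + (\<Sum>i\<in>{j..<m}. decr x i)"
  unfolding top_sum_def using sum.atLeastLessThan_concat[of 0 j m "decr x"]
  by (simp add: lessThan_atLeast0)

lemma top_sum_mono: "j \<le> m \<Longrightarrow> top_sum j \<le> top_sum m"
  using top_sum_split[of j m] sum_nonneg[of "{j..<m}" "decr x"] decr_x_nonneg by fastforce

lemma top_sum_nonneg: "0 \<le> top_sum m"
  using top_sum_mono[of 0 m] by (simp add: top_sum_def)

lemma avg_seq_eq: "avg_seq \<psi> x n = top_sum (Suc n) / \<psi> (real (Suc n))"
  unfolding avg_seq_def top_sum_def by (simp add: lessThan_Suc_atMost)

lemma avg_seq_nonneg: "0 \<le> avg_seq \<psi> x n"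
  unfolding avg_seq_eq using top_sum_nonneg psi_pos[of "real (Suc n)"] by simp

lemma avg_seq_le_norm: "avg_seq \<psi> x n \<le> m_psi_norm"
  unfolding m_psi_norm_def by (rule cSup_upper[OF _ avg_seq_bdd_above]) auto

lemma m_psi_norm_nonneg: "0 \<le> m_psi_norm"
  using avg_seq_nonneg[of 0] avg_seq_le_norm[of 0] by linarith

lemma avg_seq_Bseq: "Bseq (avg_seq \<psi> x)"
  by (rule BseqI'[of _ m_psi_norm]) (use avg_seq_le_norm avg_seq_nonneg in simp)

lemma top_sum_le: "0 < m \<Longrightarrow> top_sum m \<le> m_psi_norm * \<psi> (real m)"
  using avg_seq_le_norm[of "m - 1"] psi_pos[of "real m"] by (simp add: avg_seq_eq divide_le_eq)

text \<open>A term \<open>\<ge> r > 0\<close> infinitely often would force \<open>top_sum m \<ge> r m\<close>, which is not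
  \<open>O(\<psi>(m)) = o(m)\<close>.\<close>
lemma x_tendsto_0: "x \<longlonglongrightarrow> 0"
proof (rule ccontr)
  assume "\<not> x \<longlonglongrightarrow> 0"
  then obtain r where r: "0 < r" "\<And>N. \<exists>n\<ge>N. r \<le> x n"
    unfolding LIMSEQ_iff by (auto simp: not_less)
  have "infinite {j. r \<le> \<bar>x j\<bar>}"
    using r(2) by (auto simp: infinite_nat_iff_unbounded_le)
  hence "r \<le> decr x i" for i by (rule decr_ge_if_infinite[OF x_Bseq])
  hence lower: "real m * r \<le> top_sum m" for m
    unfolding top_sum_def using sum_mono[of "{..<m}" "\<lambda>_. r" "decr x"] by simp
  have "eventually (\<lambda>m. \<psi> (real m) / real m < r / (m_psi_norm + 1)) sequentially"
    using psi_over_n_tendsto_0 r(1) m_psi_norm_nonneg by (intro order_tendstoD) auto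
  then obtain N where N: "\<And>m. N \<le> m \<Longrightarrow> \<psi> (real m) / real m < r / (m_psi_norm + 1)"
    by (auto simp: eventually_sequentially)
  define m where "m = Suc N"
  have m: "\<psi> (real m) / real m < r / (m_psi_norm + 1)" "0 < m" using N[of m] unfolding m_def by auto
  have "\<psi> (real m) * (m_psi_norm + 1) < real m * r"
    using m psi_pos[of "real m"] m_psi_norm_nonneg by (simp add: field_simps)
  also have "\<dots> \<le> m_psi_norm * \<psi> (real m)" using lower[of m] top_sum_le[OF m(2)] by simp
  finally show False using psi_pos[of "real m"] m(2) by (simp add: algebra_simps)
qed

lemma sum_superlevel_eq_top_sum:
  "0 < u \<Longrightarrow> (\<Sum>j | u \<le> x j. x j) = top_sum (card {j. u \<le> x j})"
  using sum_superlevel_eq_sum_decr[OF x_tendsto_0] unfolding top_sum_def by simp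

lemma decr_le_if_card_superlevel_le:
  assumes "0 < u" "card {j. u \<le> x j} \<le> i"
  shows "decr x i \<le> u"
proof (rule decr_le)
  have fin: "finite {j. u \<le> x j}" using finite_superlevel_if_tendsto_0[OF x_tendsto_0 assms(1)] by simp
  then show "finite {j. u < \<bar>x j\<bar>}" by (rule finite_subset[rotated]) auto
  have "card {j. u < \<bar>x j\<bar>} \<le> card {j. u \<le> x j}" using fin by (intro card_mono) auto
  then show "card {j. u < \<bar>x j\<bar>} \<le> i" using assms(2) by simp
qed (use assms in simp)

lemma decr_tendsto_0: "decr x \<longlonglongrightarrow> 0"
  unfolding LIMSEQ_iff
proof (intro allI impI)
  fix r :: real assume "0 < r"
  show "\<exists>N. \<forall>n\<ge>N. norm (decr x n - 0) < r"
  proof (intro exI allI impI)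
    fix n assume "card {j. r / 2 \<le> x j} \<le> n"
    hence "decr x n \<le> r / 2" using \<open>0 < r\<close> by (intro decr_le_if_card_superlevel_le) auto
    then show "norm (decr x n - 0) < r" using decr_x_nonneg[of n] \<open>0 < r\<close> by simp
  qed
qed


lemma card_superlevel_bound:
  assumes "0 < u" "0 < card {j. u \<le> x j}"
  shows "real (card {j. u \<le> x j}) * u \<le> m_psi_norm * \<psi> (real (card {j. u \<le> x j}))"
proof -
  have "real (card {j. u \<le> x j}) * u \<le> (\<Sum>j | u \<le> x j. x j)"
    by (rule sum_bounded_below[where K = u, simplified]) simp
  also have "\<dots> \<le> m_psi_norm * \<psi> (real (card {j. u \<le> x j}))"
    using sum_superlevel_eq_top_sum[OF assms(1)] top_sum_le[OF assms(2)] by simp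
  finally show ?thesis .
qed

lemma card_superlevel_le_pow_2:
  assumes "0 < N" and doubling: "\<psi> (2 ^ p * real N) \<le> \<theta> ^ p * \<psi> (real N)"
    and small: "m_psi_norm * (\<theta> / 2) ^ p < 1"
  shows "card {j. \<psi> (real N) / real N \<le> x j} \<le> 2 ^ p * N"
proof (rule ccontr)
  define u where "u = \<psi> (real N) / real N"
  define s where "s = card {j. u \<le> x j}"
  define KN :: nat where "KN = 2 ^ p * N"
  assume "\<not> ?thesis"
  hence "KN < s" unfolding s_def u_def KN_def by simp
  have "0 < u" "0 < KN" unfolding u_def KN_def using assms(1) psi_pos by simp_all
  have "real KN * \<psi> (real s) \<le> real s * \<psi> (real KN)"
    using scaled_psi_le[of "real KN" "real s"] \<open>0 < KN\<close> \<open>KN < s\<close> by simp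
  also have "\<psi> (real KN) \<le> \<theta> ^ p * \<psi> (real N)" using doubling unfolding KN_def by simp
  also have "\<theta> ^ p * \<psi> (real N) = real KN * ((\<theta> / 2) ^ p * u)"
    using assms(1) unfolding u_def KN_def by (simp add: field_simps power_divide)
  finally have psi_s: "\<psi> (real s) \<le> real s * ((\<theta> / 2) ^ p * u)"
    using \<open>0 < KN\<close> \<open>KN < s\<close> by (simp add: mult_le_cancel_left_pos mult.left_commute[of "real KN"])
  have "real s * u \<le> m_psi_norm * \<psi> (real s)"
    using card_superlevel_bound[OF \<open>0 < u\<close>] \<open>KN < s\<close> unfolding s_def by simp
  also have "\<dots> \<le> m_psi_norm * (real s * ((\<theta> / 2) ^ p * u))"
    using psi_s m_psi_norm_nonneg by (rule mult_left_mono)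
  finally have "real s * u \<le> (real s * u) * (m_psi_norm * (\<theta> / 2) ^ p)" by (simp add: algebra_simps)
  with small \<open>KN < s\<close> \<open>0 < u\<close> show False by simp
qed

text \<open>Under \<open>limsup \<psi>(2t)/\<psi>(t) < 2\<close> the quotient \<open>\<psi>(t)/t\<close> decays geometrically along
  doublings, so \<open>x\<close> cannot have many more than \<open>N\<close> terms above \<open>\<psi>(N)/N\<close>.\<close>
lemma card_superlevel_le:
  assumes "Limsup at_top (\<lambda>t. ereal (\<psi> (2 * t) / \<psi> t)) < 2"
  obtains p N0 where "\<And>N. N0 \<le> N \<Longrightarrow> card {j. \<psi> (real N) / real N \<le> x j} \<le> 2 ^ p * N"
proof -
  obtain \<theta> T where \<theta>: "1 \<le> \<theta>" "\<theta> < 2" "0 < T"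
    and doubling: "\<And>t q. T \<le> t \<Longrightarrow> \<psi> (2 ^ q * t) \<le> \<theta> ^ q * \<psi> t"
    using psi_doubling_bound[OF assms] by blast
  have "(\<lambda>p. m_psi_norm * (\<theta> / 2) ^ p) \<longlonglongrightarrow> m_psi_norm * 0"
    using \<theta> by (intro tendsto_mult_left LIMSEQ_power_zero) auto
  hence "eventually (\<lambda>p. m_psi_norm * (\<theta> / 2) ^ p < 1) sequentially"
    by (intro order_tendstoD(2)) auto
  then obtain p where small: "m_psi_norm * (\<theta> / 2) ^ p < 1" by (auto simp: eventually_sequentially)
  have "T \<le> real N" if "nat \<lceil>T\<rceil> \<le> N" for N
    using real_nat_ceiling_ge[of T] that by (meson of_nat_le_iff order_trans)
  then show ?thesis
    using that[of "nat \<lceil>T\<rceil>" p] card_superlevel_le_pow_2[OF _ doubling small] \<theta>(3) by fastforce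
qed

definition upper_avg :: "nat \<Rightarrow> nat \<Rightarrow> real" where
  "upper_avg K m = (top_sum m - top_sum (m div K)) / \<psi> (real m)"

lemma upper_avg_nonneg: "0 \<le> upper_avg K m"
  unfolding upper_avg_def
  using top_sum_mono[of "m div K" m] psi_pos[of "real m"] by (cases "m = 0") simp_all

lemma upper_avg_le_norm: "upper_avg K m \<le> m_psi_norm"
proof (cases "m = 0")
  case False
  hence "top_sum m - top_sum (m div K) \<le> m_psi_norm * \<psi> (real m)"
    using top_sum_le[of m] top_sum_nonneg[of "m div K"] by simp
  then show ?thesis unfolding upper_avg_def using psi_pos[of "real m"] False by (simp add: divide_le_eq)
qed (simp add: upper_avg_def m_psi_norm_nonneg)

lemma upper_avg_Bseq: "Bseq (\<lambda>n. upper_avg K (f n))"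
  by (rule BseqI'[of _ m_psi_norm]) (use upper_avg_nonneg upper_avg_le_norm in simp)

lemma top_sum_Suc_div_diff:
  assumes "1 \<le> K"
  shows "0 \<le> top_sum (Suc m div K) - top_sum (m div K)"
    and "top_sum (Suc m div K) - top_sum (m div K) \<le> decr x (m div K)"
proof -
  have "Suc m div K \<le> (m + K) div K" using assms by (intro div_le_mono) simp
  moreover have "(m + K) div K = Suc (m div K)" using assms by simp
  moreover have "m div K \<le> Suc m div K" by (rule div_le_mono) simp
  ultimately have "Suc m div K = m div K \<or> Suc m div K = Suc (m div K)" by linarith
  then show "0 \<le> top_sum (Suc m div K) - top_sum (m div K)"
    and "top_sum (Suc m div K) - top_sum (m div K) \<le> decr x (m div K)"
    using top_sum_Suc decr_x_nonneg by auto
qed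

lemma upper_avg_Suc_diff_le:
  assumes "1 \<le> K" "1 \<le> m"
  shows "\<bar>upper_avg K (Suc m) - upper_avg K m\<bar> \<le> (decr x m + decr x (m div K)) / \<psi> 1 + m_psi_norm / real m"
proof -
  define A where "A = decr x m - (top_sum (Suc m div K) - top_sum (m div K))"
  define Q where "Q = top_sum m - top_sum (m div K)"
  define p0 where "p0 = \<psi> (real m)"
  define p1 where "p1 = \<psi> (real (Suc m))"
  have p: "0 < \<psi> 1" "\<psi> 1 \<le> p1" "0 < p0" "p0 \<le> p1"
    unfolding p0_def p1_def using assms(2) by (auto intro!: psi_pos psi_mono)
  have Q: "0 \<le> Q" "Q \<le> m_psi_norm * p0"
    unfolding Q_def p0_def using top_sum_mono[of "m div K" m] top_sum_le[of m] assms(2)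
      top_sum_nonneg[of "m div K"] by simp_all
  have "\<bar>upper_avg K (Suc m) - upper_avg K m\<bar> = \<bar>A / p1 + (Q / p1 - Q / p0)\<bar>"
    unfolding upper_avg_def A_def Q_def p0_def p1_def top_sum_Suc
    by (simp add: diff_divide_distrib add_divide_distrib)
  also have "\<dots> \<le> \<bar>A\<bar> / p1 + \<bar>Q / p1 - Q / p0\<bar>"
    using abs_triangle_ineq[of "A / p1"] p by (simp add: abs_divide)
  also have "\<bar>A\<bar> / p1 \<le> (decr x m + decr x (m div K)) / \<psi> 1"
    unfolding A_def using top_sum_Suc_div_diff[OF assms(1), of m] decr_x_nonneg[of m] p
    by (intro frac_le) auto
  also have "\<bar>Q / p1 - Q / p0\<bar> \<le> m_psi_norm / real m"
  proof -
    have "real m * (p1 - p0) \<le> p1"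
      using scaled_psi_le[of "real m" "real (Suc m)"] assms(2) \<open>p0 \<le> p1\<close> unfolding p0_def p1_def
      by (simp add: algebra_simps)
    have "Q * (real m * (p1 - p0)) \<le> (m_psi_norm * p0) * (real m * (p1 - p0))"
      by (rule mult_right_mono) (use Q p in auto)
    also have "\<dots> \<le> (m_psi_norm * p0) * p1"
      by (rule mult_left_mono) (use \<open>real m * (p1 - p0) \<le> p1\<close> m_psi_norm_nonneg p in auto)
    finally have "Q * (real m * (p1 - p0)) / (real m * (p0 * p1)) \<le> m_psi_norm * p0 * p1 / (real m * (p0 * p1))"
      using p assms(2) by (intro divide_right_mono) auto
    moreover have "Q * (real m * (p1 - p0)) / (real m * (p0 * p1)) = Q / p0 - Q / p1"
      using p assms(2) by (simp add: field_simps)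
    moreover have "m_psi_norm * p0 * p1 / (real m * (p0 * p1)) = m_psi_norm / real m"
      using p by simp
    moreover have "Q / p1 \<le> Q / p0" using p Q by (intro divide_left_mono) auto
    ultimately show ?thesis by simp
  qed
  finally show ?thesis by simp
qed

lemma upper_avg_slowly_varying:
  assumes "1 \<le> K"
  shows "(\<lambda>m. upper_avg K (Suc m) - upper_avg K m) \<longlonglongrightarrow> 0"
proof (rule Lim_null_comparison)
  show "eventually (\<lambda>m. norm (upper_avg K (Suc m) - upper_avg K m)
      \<le> (decr x m + decr x (m div K)) / \<psi> 1 + m_psi_norm / real m) sequentially"
    using upper_avg_Suc_diff_le[OF assms] by (auto simp: eventually_sequentially intro!: exI[of _ 1])
  have "(\<lambda>m. decr x (m div K)) \<longlonglongrightarrow> 0"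
    using filterlim_compose[OF decr_tendsto_0 filterlim_at_top_div_const_nat[of K]] assms by simp
  then show "(\<lambda>m. (decr x m + decr x (m div K)) / \<psi> 1 + m_psi_norm / real m) \<longlonglongrightarrow> 0"
    using decr_tendsto_0 psi_pos[of 1] by (auto intro!: tendsto_eq_intros lim_const_over_n[THEN tendsto_eq_rhs])
qed

lemma upper_avg_mult_2_le: "upper_avg (2 * K) m \<le> upper_avg K m + upper_avg 2 (m div K)"
proof -
  have "m div (2 * K) = m div K div 2" by (simp add: div_mult2_eq mult.commute)
  hence "upper_avg (2 * K) m = upper_avg K m + (top_sum (m div K) - top_sum (m div K div 2)) / \<psi> (real m)"
    unfolding upper_avg_def by (simp add: diff_divide_distrib)
  also have "(top_sum (m div K) - top_sum (m div K div 2)) / \<psi> (real m) \<le> upper_avg 2 (m div K)"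
  proof (cases "m div K = 0")
    case False
    hence "0 < m" by (metis div_0 gr0I)
    then show ?thesis unfolding upper_avg_def using False top_sum_mono[of "m div K div 2" "m div K"]
      by (intro divide_left_mono psi_mono mult_pos_pos psi_pos) auto
  qed (simp add: upper_avg_def)
  finally show ?thesis by simp
qed

definition superlevel_avg :: "nat \<Rightarrow> real" where
  "superlevel_avg n = (1 / \<psi> (real (Suc n))) *
     (\<Sum>k\<in>{k. \<psi> (real (Suc n)) / real (Suc n) \<le> x k}. x k)"

lemma superlevel_avg_eq:
  "superlevel_avg n = top_sum (card {k. \<psi> (real (Suc n)) / real (Suc n) \<le> x k}) / \<psi> (real (Suc n))"
  unfolding superlevel_avg_def using sum_superlevel_eq_top_sum psi_pos[of "real (Suc n)"] by simp

lemma superlevel_avg_nonneg: "0 \<le> superlevel_avg n"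
  unfolding superlevel_avg_eq using top_sum_nonneg psi_pos[of "real (Suc n)"] by simp

lemma top_sum_diff_le:
  assumes "0 < u" "card {j. u \<le> x j} \<le> i" "i \<le> j"
  shows "top_sum j - top_sum i \<le> real (j - i) * u"
proof -
  have "top_sum j - top_sum i = (\<Sum>k\<in>{i..<j}. decr x k)" using top_sum_split[OF assms(3)] by simp
  also have "\<dots> \<le> (\<Sum>k\<in>{i..<j}. u)"
    using assms by (intro sum_mono decr_le_if_card_superlevel_le) auto
  finally show ?thesis by simp
qed

lemma avg_seq_minus_superlevel_avg:
  assumes s: "card {k. \<psi> (real (Suc n)) / real (Suc n) \<le> x k} \<le> Suc n" and L: "1 \<le> L"
  shows "0 \<le> avg_seq \<psi> x n - superlevel_avg n"
    and "avg_seq \<psi> x n - superlevel_avg n \<le> 1 / real L + upper_avg L (Suc n)"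
proof -
  define N where "N = Suc n"
  define u where "u = \<psi> (real N) / real N"
  define s where "s = card {k. u \<le> x k}"
  define j where "j = max s (N div L)"
  have "0 < \<psi> (real N)" "0 < u" unfolding u_def N_def using psi_pos by simp_all
  have diff: "avg_seq \<psi> x n - superlevel_avg n = (top_sum N - top_sum s) / \<psi> (real N)"
    unfolding avg_seq_eq superlevel_avg_eq N_def s_def u_def by (simp add: diff_divide_distrib)
  show "0 \<le> avg_seq \<psi> x n - superlevel_avg n"
    unfolding diff using top_sum_mono[of s N] s \<open>0 < \<psi> (real N)\<close> unfolding s_def u_def N_def by simp
  have "top_sum j - top_sum s \<le> real (j - s) * u"
    using top_sum_diff_le[OF \<open>0 < u\<close>] unfolding s_def j_def by simp
  also have "\<dots> \<le> real (N div L) * u" using \<open>0 < u\<close> unfolding j_def by (intro mult_right_mono) auto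
  also have "\<dots> \<le> real N / real L * u"
    using \<open>0 < u\<close> by (intro mult_right_mono of_nat_div_le_of_nat) auto
  also have "\<dots> = \<psi> (real N) / real L" unfolding u_def N_def by simp
  finally have "top_sum N - top_sum s \<le> (top_sum N - top_sum (N div L)) + \<psi> (real N) / real L"
    using top_sum_mono[of "N div L" j] unfolding j_def by simp
  hence "(top_sum N - top_sum s) / \<psi> (real N)
      \<le> ((top_sum N - top_sum (N div L)) + \<psi> (real N) / real L) / \<psi> (real N)"
    using \<open>0 < \<psi> (real N)\<close> by (intro divide_right_mono) auto
  also have "\<dots> = upper_avg L N + 1 / real L"
    unfolding upper_avg_def using \<open>0 < \<psi> (real N)\<close> by (simp add: add_divide_distrib)
  finally show "avg_seq \<psi> x n - superlevel_avg n \<le> 1 / real L + upper_avg L (Suc n)"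
    unfolding diff N_def by simp
qed

lemma superlevel_avg_minus_avg_seq:
  assumes "Suc n \<le> card {k. \<psi> (real (Suc n)) / real (Suc n) \<le> x k}"
    and "card {k. \<psi> (real (Suc n)) / real (Suc n) \<le> x k} \<le> K * Suc n" and K: "1 \<le> K"
  shows "0 \<le> superlevel_avg n - avg_seq \<psi> x n"
    and "superlevel_avg n - avg_seq \<psi> x n \<le> real K * upper_avg K (K * Suc n)"
proof -
  define N where "N = Suc n"
  define s where "s = card {k. \<psi> (real N) / real N \<le> x k}"
  have "0 < K * N" using K unfolding N_def by simp
  hence "0 < \<psi> (real N)" "0 < \<psi> (real (K * N))" by (simp_all add: psi_pos)
  have diff: "superlevel_avg n - avg_seq \<psi> x n = (top_sum s - top_sum N) / \<psi> (real N)"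
    unfolding avg_seq_eq superlevel_avg_eq N_def s_def by (simp add: diff_divide_distrib)
  show "0 \<le> superlevel_avg n - avg_seq \<psi> x n"
    unfolding diff using top_sum_mono[of N s] assms(1) \<open>0 < \<psi> (real N)\<close> unfolding s_def N_def by simp
  have "top_sum s - top_sum N \<le> top_sum (K * N) - top_sum N"
    using top_sum_mono[of s "K * N"] assms(2) unfolding s_def N_def by simp
  also have "\<dots> = upper_avg K (K * N) * \<psi> (real (K * N))"
    unfolding upper_avg_def using K \<open>0 < \<psi> (real (K * N))\<close> by simp
  also have "\<dots> \<le> upper_avg K (K * N) * (real K * \<psi> (real N))"
  proof -
    have "0 < real N" "1 \<le> real K" using K by (simp_all add: N_def)
    hence "\<psi> (real (K * N)) \<le> real K * \<psi> (real N)" unfolding of_nat_mult by (rule psi_mult_le)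
    then show ?thesis using upper_avg_nonneg by (rule mult_left_mono)
  qed
  finally show "superlevel_avg n - avg_seq \<psi> x n \<le> real K * upper_avg K (K * Suc n)"
    unfolding diff N_def[symmetric] using \<open>0 < \<psi> (real N)\<close> by (simp add: divide_le_eq mult_ac)
qed

lemma avg_seq_superlevel_avg_close:
  assumes "card {k. \<psi> (real (Suc n)) / real (Suc n) \<le> x k} \<le> K * Suc n" "1 \<le> K" "1 \<le> L"
  shows "\<bar>avg_seq \<psi> x n - superlevel_avg n\<bar>
    \<le> upper_avg L (Suc n) + real K * upper_avg K (K * Suc n) + 1 / real L"
proof (cases "card {k. \<psi> (real (Suc n)) / real (Suc n) \<le> x k} \<le> Suc n")
  case True
  moreover have "0 \<le> real K * upper_avg K (K * Suc n)" using upper_avg_nonneg by simp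
  ultimately show ?thesis using avg_seq_minus_superlevel_avg[OF True assms(3)] by (simp add: abs_of_nonneg)
next
  case False
  moreover have "0 \<le> 1 / real L + upper_avg L (Suc n)" using upper_avg_nonneg by simp
  ultimately show ?thesis using superlevel_avg_minus_avg_seq[OF _ assms(1,2)] unfolding abs_le_iff by linarith
qed

end

section \<open>Dixmier traces\<close>

locale dixmier_trace_setting = m_psi_element + dilation_invariant_limit +
  assumes dixmier_trace: "is_dixmier_trace \<psi> \<omega>"
begin

text \<open>\<open>sigma 2 x\<close> is the sum of two disjointly supported copies of \<open>x\<close>, both with the
  rearrangement of \<open>x\<close>; this is the only place where additivity of the trace is used.\<close>
lemma tau_sigma_2: "tau \<psi> \<omega> (sigma 2 x) = 2 * tau \<psi> \<omega> x"
proof -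
  define xe where "xe j = (if even j then x (j div 2) else 0)" for j
  define xo where "xo j = (if odd j then x (j div 2) else 0)" for j
  have avg: "avg_seq \<psi> xe = avg_seq \<psi> x" "avg_seq \<psi> xo = avg_seq \<psi> x"
    unfolding avg_seq_def xe_def xo_def decr_even_spread decr_odd_spread by simp_all
  have x_div_2: "Bseq (\<lambda>j. x (j div 2))" by (rule Bseq_subseq[OF x_Bseq])
  have Bseq_xe: "Bseq xe" unfolding xe_def
    by (rule Bseq_eventually_mono[OF always_eventually x_div_2]) (simp add: x_nonneg)
  have Bseq_xo: "Bseq xo" unfolding xo_def
    by (rule Bseq_eventually_mono[OF always_eventually x_div_2]) (simp add: x_nonneg)
  have "xe \<in> m_psi \<psi>" "xo \<in> m_psi \<psi>" using Bseq_xe Bseq_xo avg avg_seq_bdd_above unfolding m_psi_def by auto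
  moreover have "\<forall>k. 0 \<le> xe k" "\<forall>k. 0 \<le> xo k" by (simp_all add: xe_def xo_def x_nonneg)
  ultimately have "tau \<psi> \<omega> (\<lambda>k. xe k + xo k) = tau \<psi> \<omega> xe + tau \<psi> \<omega> xo"
    using dixmier_trace unfolding is_dixmier_trace_def by blast
  moreover have "sigma 2 x = (\<lambda>k. xe k + xo k)" unfolding sigma_def xe_def xo_def by auto
  ultimately show ?thesis unfolding tau_def avg by simp
qed

text \<open>The averages of \<open>sigma 2 x\<close> are \<open>2 avg\<^sub>n - 2 upper_avg 2 (n + 1)\<close> up to a null
  sequence, while its trace is \<open>2 \<tau>(x)\<close>.\<close>
lemma omega_upper_avg_2: "\<omega> (\<lambda>n. upper_avg 2 (Suc n)) = 0"
proof -
  define r where "r n = (if odd (Suc n) then decr x (Suc n div 2) else 0) / \<psi> (real (Suc n))" for n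
  have avg_sigma: "avg_seq \<psi> (sigma 2 x) = (\<lambda>n. 2 * avg_seq \<psi> x n + (-2) * upper_avg 2 (Suc n) + r n)"
  proof
    fix n
    have "avg_seq \<psi> (sigma 2 x) n = (\<Sum>i<Suc n. decr x (i div 2)) / \<psi> (real (Suc n))"
      unfolding avg_seq_def decr_sigma_2 by (simp add: lessThan_Suc_atMost)
    also have "\<dots> = 2 * avg_seq \<psi> x n + (-2) * upper_avg 2 (Suc n) + r n"
      unfolding sum_lessThan_div_2 avg_seq_eq upper_avg_def r_def top_sum_def[symmetric]
      using psi_pos[of "real (Suc n)"] by (simp add: field_simps)
    finally show "avg_seq \<psi> (sigma 2 x) n = 2 * avg_seq \<psi> x n + (-2) * upper_avg 2 (Suc n) + r n" .
  qed
  have "r \<longlonglongrightarrow> 0"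
  proof (rule Lim_null_comparison)
    have "(\<lambda>n. decr x (n div 2)) \<longlonglongrightarrow> 0"
      using filterlim_compose[OF decr_tendsto_0 filterlim_at_top_div_const_nat[of 2]] by simp
    then show "(\<lambda>n. decr x (Suc n div 2) / \<psi> 1) \<longlonglongrightarrow> 0"
      by (intro tendsto_divide_zero LIMSEQ_Suc)
    have "\<bar>r n\<bar> \<le> decr x (Suc n div 2) / \<psi> 1" for n
      unfolding r_def using decr_x_nonneg psi_pos[of 1] psi_mono[of 1 "real (Suc n)"]
      by (auto intro: divide_left_mono order_trans[OF _ divide_left_mono])
    then show "eventually (\<lambda>n. norm (r n) \<le> decr x (Suc n div 2) / \<psi> 1) sequentially" by simp
  qed
  have Bseq: "Bseq (\<lambda>n. 2 * avg_seq \<psi> x n + (-2) * upper_avg 2 (Suc n))" "Bseq r"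
    by (rule Bseq_lincomb[OF avg_seq_Bseq upper_avg_Bseq])
      (rule convergent_imp_Bseq[OF convergentI[OF \<open>r \<longlonglongrightarrow> 0\<close>]])
  have "2 * \<omega> (avg_seq \<psi> x) = \<omega> (avg_seq \<psi> (sigma 2 x))" using tau_sigma_2 unfolding tau_def ..
  also have "\<dots> = 2 * \<omega> (avg_seq \<psi> x) - 2 * \<omega> (\<lambda>n. upper_avg 2 (Suc n))"
    unfolding avg_sigma using omega_add[OF Bseq] omega_null[OF \<open>r \<longlonglongrightarrow> 0\<close>]
      omega_lincomb[OF avg_seq_Bseq upper_avg_Bseq, of 2 "-2"] by simp
  finally show ?thesis by simp
qed

text \<open>Induction via \<open>upper_avg_mult_2_le\<close>; dilation invariance removes the \<open>div K\<close>.\<close>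
lemma omega_upper_avg_pow_2: "\<omega> (\<lambda>n. upper_avg (2 ^ q) (Suc n)) = 0"
proof (induction q)
  case 0
  then show ?case using omega_const[of 0] by (simp add: upper_avg_def)
next
  case (Suc q)
  define K :: nat where "K = 2 ^ q"
  have "\<omega> (\<lambda>n. upper_avg (2 * K) (Suc n)) \<le> \<omega> (\<lambda>n. upper_avg K (Suc n) + upper_avg 2 ((n + 1) div K))"
    using upper_avg_mult_2_le
    by (intro omega_mono_eventually upper_avg_Bseq Bseq_lincomb[of _ _ 1 1, simplified] always_eventually) auto
  also have "\<dots> = \<omega> (\<lambda>n. upper_avg 2 ((n + 1) div K))"
    using omega_add[OF upper_avg_Bseq upper_avg_Bseq] Suc.IH unfolding K_def by simp
  also have "\<dots> = 0"
    using omega_div_eq[OF upper_avg_Bseq[of _ id, simplified] upper_avg_slowly_varying] omega_upper_avg_2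
    unfolding K_def by simp
  finally show ?case
    using omega_nonneg[OF upper_avg_Bseq upper_avg_nonneg] unfolding K_def by (simp add: antisym)
qed

lemma omega_upper_avg_pow_2_dilated: "\<omega> (\<lambda>n. upper_avg (2 ^ p) (2 ^ p * (n + 1))) = 0"
  using omega_mult_eq[OF upper_avg_Bseq[of _ id, simplified] upper_avg_slowly_varying]
    omega_upper_avg_pow_2[of p] by simp

lemma superlevel_avg_Bseq:
  assumes "\<And>n. N0 \<le> n \<Longrightarrow> card {k. \<psi> (real (Suc n)) / real (Suc n) \<le> x k} \<le> K * Suc n" "1 \<le> K"
  shows "Bseq superlevel_avg"
proof (rule Bseq_eventually_mono[OF _ Bfun_const])
  have "superlevel_avg n \<le> m_psi_norm + 1 + real K * m_psi_norm" if "N0 \<le> n" for n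
  proof -
    have "real K * upper_avg K (K * Suc n) \<le> real K * m_psi_norm"
      by (intro mult_left_mono upper_avg_le_norm) simp
    moreover have "upper_avg 1 (Suc n) = 0" by (simp add: upper_avg_def)
    ultimately show ?thesis
      using avg_seq_superlevel_avg_close[OF assms(1)[OF that] assms(2), of 1] avg_seq_le_norm[of n]
      unfolding abs_le_iff by simp
  qed
  then show "eventually (\<lambda>n. norm (superlevel_avg n) \<le> norm (m_psi_norm + 1 + real K * m_psi_norm)) sequentially"
    using superlevel_avg_nonneg m_psi_norm_nonneg by (auto simp: eventually_sequentially)
qed

lemma omega_avg_seq_eq_omega_superlevel_avg:
  assumes "Limsup at_top (\<lambda>t. ereal (\<psi> (2 * t) / \<psi> t)) < 2"
  shows "\<omega> (avg_seq \<psi> x) = \<omega> superlevel_avg"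
proof (rule eq_if_abs_diff_le_pow_2)
  fix q :: nat
  obtain p N0 where card_le: "\<And>N. N0 \<le> N \<Longrightarrow> card {j. \<psi> (real N) / real N \<le> x j} \<le> 2 ^ p * N"
    using card_superlevel_le[OF assms] by blast
  define w where "w n = upper_avg (2 ^ q) (Suc n) + 2 ^ p * upper_avg (2 ^ p) (2 ^ p * Suc n) + 1 / 2 ^ q" for n
  have card_le': "card {k. \<psi> (real (Suc n)) / real (Suc n) \<le> x k} \<le> 2 ^ p * Suc n" if "N0 \<le> n" for n
    using card_le[of "Suc n"] that by simp
  have K1: "(1::nat) \<le> 2 ^ p" by simp
  have Bseq_upper: "Bseq (\<lambda>n. 1 * upper_avg (2 ^ q) (Suc n) + 2 ^ p * upper_avg (2 ^ p) (2 ^ p * Suc n))"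
    by (rule Bseq_lincomb[OF upper_avg_Bseq upper_avg_Bseq])
  have Bseq_w: "Bseq w" unfolding w_def using Bseq_add[OF Bseq_upper] by simp
  have "\<bar>\<omega> (avg_seq \<psi> x) - \<omega> superlevel_avg\<bar> \<le> \<omega> w"
  proof (rule omega_abs_diff_le[OF avg_seq_Bseq superlevel_avg_Bseq[OF card_le' K1] Bseq_w])
    show "eventually (\<lambda>n. \<bar>avg_seq \<psi> x n - superlevel_avg n\<bar> \<le> w n) sequentially"
    proof (rule eventually_sequentiallyI)
      fix n assume "N0 \<le> n"
      show "\<bar>avg_seq \<psi> x n - superlevel_avg n\<bar> \<le> w n"
        using avg_seq_superlevel_avg_close[OF card_le'[OF \<open>N0 \<le> n\<close>], of "2 ^ q"] unfolding w_def by simp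
    qed
  qed
  also have "\<omega> w = 1 / 2 ^ q"
    using omega_add[OF Bseq_upper Bfun_const] omega_const
      omega_lincomb[OF upper_avg_Bseq[of "2 ^ q" Suc] upper_avg_Bseq[of "2 ^ p" "\<lambda>n. 2 ^ p * Suc n"], of 1 "2 ^ p"]
      omega_upper_avg_pow_2 omega_upper_avg_pow_2_dilated
    unfolding w_def by simp
  finally show "\<bar>\<omega> (avg_seq \<psi> x) - \<omega> superlevel_avg\<bar> \<le> 1 / 2 ^ q" .
qed

end

theorem theorem3p7:
  fixes \<psi> :: "real \<Rightarrow> real" and \<omega> :: "(nat \<Rightarrow> real) \<Rightarrow> real" and x :: "nat \<Rightarrow> real"
  assumes "Psi_class \<psi>"
    and "Limsup at_top (\<lambda>t. ereal (\<psi> (2 * t) / \<psi> t)) < 2"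
    and "dil_inv_gen_limit \<omega>"
    and "is_dixmier_trace \<psi> \<omega>"
    and "x \<in> m_psi \<psi>"
    and "\<forall>k. 0 \<le> x k"
  shows "tau \<psi> \<omega> x =
    \<omega> (\<lambda>n. (1 / \<psi> (real (Suc n))) *
         (\<Sum>k\<in>{k. \<psi> (real (Suc n)) / real (Suc n) \<le> x k}. x k))"
proof -
  interpret dixmier_trace_setting \<psi> x \<omega>
    by unfold_locales (use assms in \<open>simp_all add: Psi_function_def\<close>)
  show ?thesis
    using omega_avg_seq_eq_omega_superlevel_avg[OF assms(2)] unfolding tau_def superlevel_avg_def .
qed

end
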